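(* For all $r,s\ge1$, as an identity of polynomials in $q$, $$\sum_C(q-1)^{|S(C)|-l(C)}(-1)^{|S(C)|}=q^{\min(r,s)},$$ where the sum runs over all cells $C$ for $(r,s)$, including the empty cell.
   Context: A cell (for given $r,s$) is a finite (possibly empty) sequence of distinct pairs $(i_1,j_1),\dots,(i_l,j_l)$ with $1\le i_k\le r$, $1\le j_k\le s$, $i_1\le\cdots\le i_l$ and $j_1\le\cdots\le j_l$; $l(C)=l$ and $|S(C)|=|\{i_1,\dots,i_l\}|+|\{j_1,\dots,j_l\}|$ (so the empty cell has $l=|S|=0$). *)

theory Defs
  imports "HOL-Computational_Algebra.Polynomial"
begin

definition is_cell :: "nat \<Rightarrow> nat \<Rightarrow> (nat \<times> nat) list \<Rightarrow> bool" where
  "is_cell r s C \<longleftrightarrow> distinct C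
     \<and> (\<forall>p\<in>set C. 1 \<le> fst p \<and> fst p \<le> r \<and> 1 \<le> snd p \<and> snd p \<le> s)
     \<and> sorted (map fst C) \<and> sorted (map snd C)"

definition cells :: "nat \<Rightarrow> nat \<Rightarrow> (nat \<times> nat) list set" where
  "cells r s = {C. is_cell r s C}"

definition cell_l :: "(nat \<times> nat) list \<Rightarrow> nat" where
  "cell_l C = length C"

definition cell_S :: "(nat \<times> nat) list \<Rightarrow> nat" where
  "cell_S C = card (fst ` set C) + card (snd ` set C)"

end

theory Submission
  imports Defs
begin

text \<open>A cell for (r,s) either avoids row r or column s,
  or it ends in (r,s) and what precedes is such a cell. Appending (r,s) multiplies the weight by
  q - 1 if the shorter cell avoids both row r and column s (|S| grows by 2, l by 1), and by -1
  otherwise (|S| grows by 1). Summing, the cells missing row r or column s only partly cancel: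
  what survives is q times the sum for (r-1,s-1), and induction gives q^min(r,s).\<close>

definition cell_weight :: "'a::comm_ring_1 \<Rightarrow> (nat \<times> nat) list \<Rightarrow> 'a" where
  "cell_weight q C = (q - 1) ^ (cell_S C - cell_l C) * (-1) ^ cell_S C"

lemma sorted_pairs_comparable:
  assumes "sorted (map fst C)" "sorted (map snd C)" "p \<in> set C" "p' \<in> set C"
  shows "(fst p \<le> fst p' \<and> snd p \<le> snd p') \<or> (fst p' \<le> fst p \<and> snd p' \<le> snd p)"
proof -
  obtain i j where "i < length C" "C ! i = p" "j < length C" "C ! j = p'"
    using assms(3,4) by (auto simp: in_set_conv_nth)
  moreover have "i \<le> j \<or> j \<le> i" by linarith
  ultimately show ?thesis
    using sorted_nth_mono[OF assms(1)] sorted_nth_mono[OF assms(2)] by auto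
qed

lemma sorted_pairs_corner_mem:
  assumes "sorted (map fst C)" "sorted (map snd C)"
    and "\<forall>u\<in>set C. fst u \<le> fst x \<and> snd u \<le> snd x"
    and "fst x \<in> fst ` set C" "snd x \<in> snd ` set C"
  shows "x \<in> set C"
proof -
  obtain y z where y: "y \<in> set C" "fst y = fst x" and z: "z \<in> set C" "snd z = snd x"
    using assms(4,5) by force
  from sorted_pairs_comparable[OF assms(1,2) y(1) z(1)] have "z = x \<or> y = x"
    using assms(3) y z by (auto simp: prod_eq_iff)
  then show ?thesis using y z by blast
qed

lemma cell_snoc_new_coordinate:
  assumes "distinct (C @ [x])" "sorted (map fst (C @ [x]))" "sorted (map snd (C @ [x]))"
  shows "fst x \<notin> fst ` set C \<or> snd x \<notin> snd ` set C"
  using sorted_pairs_corner_mem[of C x] assms by (auto simp: sorted_append)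

lemma cell_l_le_cell_S:
  "distinct C \<Longrightarrow> sorted (map fst C) \<Longrightarrow> sorted (map snd C) \<Longrightarrow> cell_l C \<le> cell_S C"
proof (induction C rule: rev_induct)
  case Nil
  then show ?case by (simp add: cell_l_def cell_S_def)
next
  case (snoc x C)
  have "cell_l C \<le> cell_S C" using snoc by (simp add: sorted_append)
  moreover have "fst x \<notin> fst ` set C \<or> snd x \<notin> snd ` set C"
    using cell_snoc_new_coordinate snoc.prems by blast
  ultimately show ?case
    by (auto simp: cell_l_def cell_S_def card_insert_if)
qed

lemma cell_weight_snoc:
  assumes "is_cell r s (C @ [x])"
  shows "cell_weight q (C @ [x])
    = (if fst x \<in> fst ` set C \<or> snd x \<in> snd ` set C then -1 else q - 1) * cell_weight q C"
proof -
  have cell: "distinct (C @ [x])" "sorted (map fst (C @ [x]))" "sorted (map snd (C @ [x]))"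
    using assms by (simp_all add: is_cell_def)
  then have "cell_l C \<le> cell_S C"
    by (intro cell_l_le_cell_S) (simp_all add: sorted_append)
  moreover have "fst x \<notin> fst ` set C \<or> snd x \<notin> snd ` set C"
    using cell_snoc_new_coordinate[OF cell] .
  ultimately show ?thesis
    by (auto simp: cell_weight_def cell_l_def cell_S_def card_insert_if Suc_diff_le)
qed

lemma finite_cells: "finite (cells r s)"
proof (rule finite_subset)
  show "cells r s \<subseteq> {xs. set xs \<subseteq> {1..r} \<times> {1..s} \<and> distinct xs}"
    by (auto simp: cells_def is_cell_def mem_Times_iff)
  show "finite {xs. set xs \<subseteq> {1..r} \<times> {1..s} \<and> distinct xs}"
    by (rule finite_subset_distinct) simp
qed

lemma cells_0_left: "cells 0 s = {[]}"
proof -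
  have "is_cell 0 s C \<longleftrightarrow> C = []" for C by (cases C) (auto simp: is_cell_def)
  then show ?thesis by (auto simp: cells_def)
qed

lemma cells_0_right: "cells r 0 = {[]}"
proof -
  have "is_cell r 0 C \<longleftrightarrow> C = []" for C by (cases C) (auto simp: is_cell_def)
  then show ?thesis by (auto simp: cells_def)
qed

lemma cells_pred_row_iff:
  "1 \<le> r \<Longrightarrow> C \<in> cells (r - 1) s \<longleftrightarrow> C \<in> cells r s \<and> r \<notin> fst ` set C"
  by (force simp: cells_def is_cell_def)

lemma cells_pred_col_iff:
  "1 \<le> s \<Longrightarrow> C \<in> cells r (s - 1) \<longleftrightarrow> C \<in> cells r s \<and> s \<notin> snd ` set C"
  by (force simp: cells_def is_cell_def)

lemma snoc_corner_in_cells: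
  assumes "1 \<le> r" "1 \<le> s" "C \<in> cells (r - 1) s \<union> cells r (s - 1)"
  shows "C @ [(r, s)] \<in> cells r s"
  using assms by (auto simp: cells_def is_cell_def sorted_append)

lemma cells_snoc_corner_decomp:
  assumes "1 \<le> r" "1 \<le> s"
  defines "U \<equiv> cells (r - 1) s \<union> cells r (s - 1)"
  shows "cells r s = U \<union> (\<lambda>C. C @ [(r, s)]) ` U"
proof (intro equalityI subsetI)
  fix C assume C: "C \<in> cells r s"
  show "C \<in> U \<union> (\<lambda>C. C @ [(r, s)]) ` U"
  proof (cases "C \<in> U")
    case False
    then have row: "r \<in> fst ` set C" and col: "s \<in> snd ` set C"
      using C cells_pred_row_iff[OF assms(1)] cells_pred_col_iff[OF assms(2)]
      unfolding U_def by blast+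
    then obtain C' x where Cx: "C = C' @ [x]" by (metis empty_iff image_empty list.set(1) rev_exhaust)
    have cell: "is_cell r s (C' @ [x])" using C Cx by (simp add: cells_def)
    then have "\<forall>u\<in>set C. fst u \<le> fst x \<and> snd u \<le> snd x" and "fst x \<le> r" "snd x \<le> s"
      unfolding Cx is_cell_def by (auto simp: sorted_append)
    moreover obtain y z where "y \<in> set C" "fst y = r" "z \<in> set C" "snd z = s"
      using row col by force
    ultimately have "fst x = r" "snd x = s"
      by (metis le_antisym)+
    then have x: "x = (r, s)" by (simp add: prod_eq_iff)
    have "C' \<in> cells r s" using cell by (simp add: cells_def is_cell_def sorted_append)
    moreover have "(r, s) \<notin> set C'" using cell x by (simp add: is_cell_def)
    ultimately have "r \<notin> fst ` set C' \<or> s \<notin> snd ` set C'"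
      using sorted_pairs_corner_mem[of C' "(r, s)"] by (auto simp: cells_def is_cell_def)
    then have "C' \<in> U"
      using \<open>C' \<in> cells r s\<close> cells_pred_row_iff[OF assms(1)] cells_pred_col_iff[OF assms(2)]
      unfolding U_def by blast
    then show ?thesis using Cx x by blast
  qed simp
next
  fix C assume "C \<in> U \<union> (\<lambda>C. C @ [(r, s)]) ` U"
  then show "C \<in> cells r s"
    using snoc_corner_in_cells[OF assms(1,2)] cells_pred_row_iff[OF assms(1)]
      cells_pred_col_iff[OF assms(2)] unfolding U_def by blast
qed

lemma sum_cell_weight_step:
  assumes "1 \<le> r" "1 \<le> s"
  shows "(\<Sum>C\<in>cells r s. cell_weight q C) = q * (\<Sum>C\<in>cells (r - 1) (s - 1). cell_weight q C)"
proof -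
  define U where "U = cells (r - 1) s \<union> cells r (s - 1)"
  let ?I = "cells (r - 1) (s - 1)"
  have fin: "finite U" by (simp add: U_def finite_cells)
  have "?I \<subseteq> U" by (auto simp: U_def cells_def is_cell_def)
  have snoc_weight: "cell_weight q (C @ [(r, s)]) = (if C \<in> ?I then q - 1 else -1) * cell_weight q C"
    if "C \<in> U" for C
  proof -
    have "C \<in> cells r s"
      using that cells_pred_row_iff[OF assms(1)] cells_pred_col_iff[OF assms(2)] U_def by blast
    then have "C \<in> ?I \<longleftrightarrow> r \<notin> fst ` set C \<and> s \<notin> snd ` set C"
      using cells_pred_row_iff[OF assms(1)] cells_pred_col_iff[OF assms(2)]
        cells_pred_row_iff[OF assms(1), of C "s - 1"] by blast
    moreover have "is_cell r s (C @ [(r, s)])"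
      using snoc_corner_in_cells[OF assms] that U_def by (simp add: cells_def)
    ultimately show ?thesis by (simp add: cell_weight_snoc)
  qed
  have disjoint: "U \<inter> (\<lambda>C. C @ [(r, s)]) ` U = {}"
    using assms by (auto simp: U_def cells_def is_cell_def)
  have "(\<Sum>C\<in>cells r s. cell_weight q C)
      = (\<Sum>C\<in>U. cell_weight q C) + (\<Sum>C\<in>U. cell_weight q (C @ [(r, s)]))"
    unfolding cells_snoc_corner_decomp[OF assms] U_def[symmetric]
    using fin disjoint by (simp add: sum.union_disjoint sum.reindex inj_on_def)
  also have "\<dots> = (\<Sum>C\<in>U. (1 + (if C \<in> ?I then q - 1 else -1)) * cell_weight q C)"
    unfolding sum.distrib[symmetric] by (rule sum.cong) (simp_all add: snoc_weight distrib_right)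
  also have "\<dots> = (\<Sum>C\<in>U. if C \<in> ?I then q * cell_weight q C else 0)"
    by (rule sum.cong) simp_all
  also have "\<dots> = q * (\<Sum>C\<in>?I. cell_weight q C)"
    using fin \<open>?I \<subseteq> U\<close> by (simp add: sum.inter_restrict[symmetric] Int_absorb1 sum_distrib_left)
  finally show ?thesis .
qed

lemma sum_cell_weight: "(\<Sum>C\<in>cells r s. cell_weight q C) = q ^ min r s"
proof (induction r arbitrary: s)
  case 0
  then show ?case by (simp add: cells_0_left cell_weight_def cell_S_def cell_l_def)
next
  case (Suc r)
  show ?case
  proof (cases s)
    case 0
    then show ?thesis by (simp add: cells_0_right cell_weight_def cell_S_def cell_l_def)
  next
    case (Suc s')
    then show ?thesis using sum_cell_weight_step[of "Suc r" s q] Suc.IH[of s'] by simp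
  qed
qed

theorem mainTheorem14:
  fixes r s :: nat
  assumes "r \<ge> 1" and "s \<ge> 1"
  shows "(\<Sum>C\<in>cells r s. [:-1, 1:] ^ (cell_S C - cell_l C) * (-1) ^ cell_S C)
           = ([:0, 1:] :: int poly) ^ min r s"
proof -
  have "[:0, 1:] - 1 = ([:-1, 1:] :: int poly)" by (simp add: one_pCons)
  then show ?thesis using sum_cell_weight[of "[:0, 1:] :: int poly" r s]
    by (simp only: cell_weight_def)
qed

end
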